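(* Let $$R=\begin{pmatrix} 1 & -2 \\ 1 & 1 \end{pmatrix}.$$ There exists a driving function $f:[0,\infty)\to\mathbb{R}^2$ for which the Skorokhod problem with matrix $R$ has two distinct solutions $(g,m)$ and $(\overline g,\overline m)$ with $g\neq \overline g$; that is, both satisfy $g(t)=f(t)+Rm(t)$ and $\overline g(t)=f(t)+R\overline m(t)$ for all $t\ge 0$ together with the other conditions of the Skorokhod problem.
   Context: For $b=(b_1,b_2)\in\mathbb{R}^2$ write $b\ge 0$ if $b_1\ge 0$ and $b_2\ge 0$, and let $D=\{b\in\mathbb{R}^2: b\ge 0\}$. A driving function is a continuous function $f:[0,\infty)\to\mathbb{R}^2$ with $f(0)\ge 0$. Given a real $2\times 2$ matrix $R$ and a driving function $f$, a solution of the Skorokhod problem is a pair $(g,m)$ where (1) $g:[0,\infty)\to D$ is continuous; (2) $m=(m_1,m_2):[0,\infty)\to\mathbb{R}^2$ is continuous with $m(0)=0$ and each $m_j$ non-decreasing; (3) $g(t)=f(t)+Rm(t)$ for all $t\ge 0$ (the Skorokhod equation); and (4) for $j=1,2$, $m_j$ increases only when $g_j=0$, i.e. $\int_0^\infty g_j(t)\,dm_j(t)=0$. *)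

theory Defs
  imports "HOL-Analysis.Analysis"
begin

text \<open>Vectors in R^2 are elements of type real^2, components indexed by 1 and 2.
  Functions on [0,oo) are total functions real => real^2 of which only the
  restriction to {0..} matters.\<close>

definition nonneg2 :: "real^2 \<Rightarrow> bool" where
  "nonneg2 b \<longleftrightarrow> b$1 \<ge> 0 \<and> b$2 \<ge> 0"

definition driving_function :: "(real \<Rightarrow> real^2) \<Rightarrow> bool" where
  "driving_function f \<longleftrightarrow> continuous_on {0..} f \<and> nonneg2 (f 0)"

text \<open>Condition (4): the Lebesgue--Stieltjes integral of g_j with respect to dm_j over
  [0,oo) vanishes. The Stieltjes measure of m_j is the interval measure of the
  non-decreasing continuous function t \<mapsto> m_j(max 0 t) (constant on (-oo,0]).\<close>

definition skorokhod_solution ::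
  "real^2^2 \<Rightarrow> (real \<Rightarrow> real^2) \<Rightarrow> (real \<Rightarrow> real^2) \<Rightarrow> (real \<Rightarrow> real^2) \<Rightarrow> bool" where
  "skorokhod_solution R f g m \<longleftrightarrow>
     continuous_on {0..} g \<and> (\<forall>t\<ge>0. nonneg2 (g t)) \<and>
     continuous_on {0..} m \<and> m 0 = 0 \<and>
     (\<forall>j. mono_on {0..} (\<lambda>t. m t $ j)) \<and>
     (\<forall>t\<ge>0. g t = f t + R *v m t) \<and>
     (\<forall>j. (\<integral>\<^sup>+ t. ennreal (g t $ j) * indicator {0..} t
              \<partial>interval_measure (\<lambda>t. m (max 0 t) $ j)) = 0)"

definition R_ex :: "real^2^2" where
  "R_ex = vector [vector [1, -2], vector [1, 1]]"

end

theory Submission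
  imports Defs
begin

text \<open>The counterexample is self-similar: f, g and m satisfy h(4t) = 4 h(t), so they are
  determined by profiles on [1,4] with h(4) = 4 h(1). Such functions are continuous at 0 with
  value 0, monotone if their profiles are, and the complementarity condition reduces to the
  profiles, because m_j is locally constant around every time where g_j > 0. On [1,4] two
  piecewise linear regulators for the same driving profile push on the two faces in different
  orders; their rescaled copies accumulate at the corner at time 0, so the resulting solutions
  both start at 0 and differ at t = 1.\<close>

lemma nn_integral_interval_measure_eq_0_if_locally_flat:
  fixes F :: "real \<Rightarrow> real" and h :: "real \<Rightarrow> ennreal"
  assumes mono: "mono F" and right_cont: "\<And>x. continuous (at_right x) F"
    and flat: "\<And>t. h t \<noteq> 0 \<Longrightarrow> \<exists>a b. a < t \<and> t < b \<and> F a = F b"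
  shows "(\<integral>\<^sup>+ t. h t \<partial>interval_measure F) = 0"
proof -
  define I where "I = {(a, b). a \<in> \<rat> \<and> b \<in> \<rat> \<and> a < b \<and> F a = F b}"
  have "countable I"
    by (rule countable_subset[of _ "\<rat> \<times> \<rat>"]) (auto simp: I_def countable_rat)
  then have null: "(\<Union>(a, b)\<in>I. {a<..b}) \<in> null_sets (interval_measure F)"
  proof (rule null_sets_UN')
    fix i assume "i \<in> I"
    then obtain a b where "i = (a, b)" "a < b" "F a = F b"
      unfolding I_def by auto
    then show "(case i of (a, b) \<Rightarrow> {a<..b}) \<in> null_sets (interval_measure F)"
      using emeasure_interval_measure_Ioc[of a b F] mono right_cont
      by (auto simp: mono_def)
  qed
  have "AE t in interval_measure F. h t = 0"
  proof (rule AE_I'[OF null], safe)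
    fix t assume "h t \<noteq> 0"
    then obtain a b where ab: "a < t" "t < b" "F a = F b"
      using flat by blast
    obtain a' where a': "a' \<in> \<rat>" "a < a'" "a' < t"
      using Rats_dense_in_real[OF \<open>a < t\<close>] by blast
    obtain b' where b': "b' \<in> \<rat>" "t < b'" "b' < b"
      using Rats_dense_in_real[OF \<open>t < b\<close>] by blast
    have "F a \<le> F a'" "F a' \<le> F b'" "F b' \<le> F b"
      using a' b' mono by (auto simp: mono_def)
    then have "(a', b') \<in> I"
      using a' b' ab unfolding I_def by auto
    with a' b' show "t \<in> (\<Union>(a, b)\<in>I. {a<..b})"
      by (intro UN_I[of "(a', b')"]) auto
  qed
  then show ?thesis
    by (simp add: nn_integral_cong_AE)
qed

locale self_similar_extension =
  fixes q :: real
  assumes base_gt_1: "1 < q"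
begin

text \<open>For t in [q^n, q^(n+1)) the extension is q^n \<Phi>(t / q^n); only the profile on [1,q) is used,
  and the compatibility condition \<Phi> q = q \<Phi> 1 makes the pieces fit together.\<close>

definition extend :: "(real \<Rightarrow> 'a::real_vector) \<Rightarrow> real \<Rightarrow> 'a" where
  "extend \<Phi> t = (if t \<le> 0 then 0
     else q powr \<lfloor>log q t\<rfloor> *\<^sub>R \<Phi> (t / q powr \<lfloor>log q t\<rfloor>))"

lemma extend_0 [simp]: "extend \<Phi> 0 = 0"
  by (simp add: extend_def)

lemma floor_log_eq_iff: "t > 0 \<Longrightarrow> \<lfloor>log q t\<rfloor> = n \<longleftrightarrow> q powr n \<le> t \<and> t < q powr (n + 1)"
  using floor_log_eq_powr_iff base_gt_1 by simp

lemma scale_decomposition: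
  assumes "t > 0"
  obtains n :: int and s where "1 \<le> s" "s < q" "t = q powr n * s"
proof
  let ?n = "\<lfloor>log q t\<rfloor>"
  have "q powr ?n \<le> t" "t < q powr (?n + 1)"
    using floor_log_eq_iff[OF assms, of ?n] by simp_all
  then show "1 \<le> t / q powr ?n" "t / q powr ?n < q" "t = q powr ?n * (t / q powr ?n)"
    using base_gt_1 by (simp_all add: powr_add field_simps)
qed

lemma extend_scale:
  fixes n :: int
  shows "extend \<Phi> (q powr n * x) = q powr n *\<^sub>R extend \<Phi> x"
proof (cases "x > 0")
  case True
  then have "q powr n * x > 0"
    using base_gt_1 by simp
  moreover have "\<lfloor>log q (q powr n * x)\<rfloor> = n + \<lfloor>log q x\<rfloor>"
    using True base_gt_1 by (simp add: log_mult add.commute)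
  ultimately show ?thesis
    using True by (simp add: extend_def powr_add)
next
  case False
  then show ?thesis
    using base_gt_1 by (simp add: extend_def mult_nonneg_nonpos)
qed

lemma extend_eq:
  assumes "1 \<le> s" "s < q"
  shows "extend \<Phi> s = \<Phi> s"
proof -
  have "\<lfloor>log q s\<rfloor> = 0"
    using assms floor_log_eq_iff[of s 0] by simp
  then show ?thesis
    using assms by (simp add: extend_def)
qed

lemma extend_eq_closed:
  assumes "\<Phi> q = q *\<^sub>R \<Phi> 1" "1 \<le> s" "s \<le> q"
  shows "extend \<Phi> s = \<Phi> s"
proof (cases "s = q")
  case True
  then show ?thesis
    using assms extend_scale[of \<Phi> 1 1] extend_eq[of 1 \<Phi>] base_gt_1 by simp
next
  case False
  with assms show ?thesis
    by (simp add: extend_eq)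
qed

lemma extend_scaled:
  fixes n :: int
  assumes "\<Phi> q = q *\<^sub>R \<Phi> 1" "1 \<le> s" "s \<le> q"
  shows "extend \<Phi> (q powr n * s) = q powr n *\<^sub>R \<Phi> s"
  using assms by (simp add: extend_scale extend_eq_closed)

lemma extend_linear: "linear L \<Longrightarrow> extend (\<lambda>s. L (\<Phi> s)) t = L (extend \<Phi> t)"
  by (simp add: extend_def linear_cmul linear_0)

lemma extend_add: "extend (\<lambda>s. \<Phi> s + \<Psi> s) t = extend \<Phi> t + extend \<Psi> t"
  by (simp add: extend_def scaleR_add_right)

lemma extend_nth: "extend \<Phi> t $ j = extend (\<lambda>s. \<Phi> s $ j) t"
  by (simp add: extend_def)

lemma extend_nonneg:
  fixes \<phi> :: "real \<Rightarrow> real"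
  assumes "\<And>s. 1 \<le> s \<Longrightarrow> s < q \<Longrightarrow> 0 \<le> \<phi> s"
  shows "0 \<le> extend \<phi> t"
proof (cases "t > 0")
  case True
  then obtain n :: int and s where "1 \<le> s" "s < q" "t = q powr n * s"
    by (rule scale_decomposition)
  with assms[of s] show ?thesis
    by (simp add: extend_scale extend_eq)
qed (simp add: extend_def)

lemma continuous_on_extend_band:
  fixes \<Phi> :: "real \<Rightarrow> 'a::real_normed_vector" and n :: int
  assumes "\<Phi> q = q *\<^sub>R \<Phi> 1" "continuous_on {1..q} \<Phi>"
  shows "continuous_on {q powr n..q powr (n + 1)} (extend \<Phi>)"
proof -
  have "continuous_on {q powr n..q powr (n + 1)} (\<lambda>t. q powr n *\<^sub>R \<Phi> (t / q powr n))"
    using base_gt_1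
    by (intro continuous_intros continuous_on_compose2[OF assms(2)]) (auto simp: powr_add field_simps)
  moreover have "q powr n *\<^sub>R \<Phi> (t / q powr n) = extend \<Phi> t"
    if "t \<in> {q powr n..q powr (n + 1)}" for t
    using that base_gt_1 extend_scaled[OF assms(1), of "t / q powr n" n]
    by (simp add: powr_add field_simps)
  ultimately show ?thesis
    by (rule continuous_on_eq)
qed

lemma isCont_extend:
  fixes \<Phi> :: "real \<Rightarrow> 'a::real_normed_vector"
  assumes "\<Phi> q = q *\<^sub>R \<Phi> 1" "continuous_on {1..q} \<Phi>" "t > 0"
  shows "isCont (extend \<Phi>) t"
proof -
  obtain n :: int and s where s: "1 \<le> s" "s < q" "t = q powr n * s"
    using scale_decomposition[OF \<open>t > 0\<close>] by blast
  let ?U = "{q powr (n - 1)<..<q powr (n + 1)}"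
  have "continuous_on ({q powr (n - 1)..q powr n} \<union> {q powr n..q powr (n + 1)}) (extend \<Phi>)"
    using continuous_on_extend_band[OF assms(1,2), of "n - 1"] continuous_on_extend_band[OF assms(1,2), of n]
    by (intro continuous_on_closed_Un) simp_all
  moreover have "?U \<subseteq> {q powr (n - 1)..q powr n} \<union> {q powr n..q powr (n + 1)}"
    by auto
  ultimately have "continuous_on ?U (extend \<Phi>)"
    by (rule continuous_on_subset)
  moreover have "q powr (n - 1) < q powr n" "q powr n \<le> t" "t < q powr (n + 1)"
    using s base_gt_1 by (simp_all add: powr_add)
  then have "t \<in> ?U"
    by simp
  ultimately show ?thesis
    using continuous_on_eq_continuous_at[OF open_greaterThanLessThan] by blast
qed

lemma norm_extend_le:
  fixes \<Phi> :: "real \<Rightarrow> 'a::real_normed_vector"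
  assumes bound: "\<And>s. 1 \<le> s \<Longrightarrow> s < q \<Longrightarrow> norm (\<Phi> s) \<le> B" and "0 \<le> B" "0 \<le> t"
  shows "norm (extend \<Phi> t) \<le> B * t"
proof (cases "t > 0")
  case True
  then obtain n :: int and s where s: "1 \<le> s" "s < q" "t = q powr n * s"
    by (rule scale_decomposition)
  then have "norm (extend \<Phi> t) = q powr n * norm (\<Phi> s)"
    by (simp add: extend_scale extend_eq)
  also have "\<dots> \<le> q powr n * (s * B)"
    using bound[OF s(1,2)] s \<open>0 \<le> B\<close> mult_right_mono[of 1 s B] by (intro mult_left_mono) auto
  finally show ?thesis
    using s by (simp add: mult_ac)
qed (use \<open>0 \<le> t\<close> in simp)

lemma continuous_on_extend:
  fixes \<Phi> :: "real \<Rightarrow> 'a::real_normed_vector"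
  assumes compat: "\<Phi> q = q *\<^sub>R \<Phi> 1" and cont: "continuous_on {1..q} \<Phi>"
  shows "continuous_on {0..} (extend \<Phi>)"
proof -
  obtain B where B: "\<And>s. s \<in> {1..q} \<Longrightarrow> norm (\<Phi> s) \<le> B"
    using compact_imp_bounded[OF compact_continuous_image[OF cont]] base_gt_1
    by (force simp: bounded_iff)
  have "norm (\<Phi> 1) \<le> B"
    using B base_gt_1 by simp
  then have "0 \<le> B"
    using norm_ge_zero order_trans by blast
  have "(extend \<Phi> \<longlongrightarrow> 0) (at 0 within {0..})"
  proof (rule Lim_null_comparison)
    show "\<forall>\<^sub>F t in at 0 within {0..}. norm (extend \<Phi> t) \<le> B * t"
      unfolding eventually_at_filter
      by (rule always_eventually) (simp add: norm_extend_le B \<open>0 \<le> B\<close>)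
    show "((\<lambda>t. B * t) \<longlongrightarrow> 0) (at 0 within {0..})"
      by (rule tendsto_mult_right_zero[OF tendsto_ident_at])
  qed
  then have "continuous (at 0 within {0..}) (extend \<Phi>)"
    by (simp add: continuous_within)
  then have "continuous (at t within {0..}) (extend \<Phi>)" if "t \<ge> 0" for t
    using that isCont_extend[OF compat cont] continuous_at_imp_continuous_at_within[of t "extend \<Phi>"]
    by (cases "t = 0") simp_all
  then show ?thesis
    by (simp add: continuous_on_eq_continuous_within)
qed

lemma extend_band_bounds:
  fixes \<phi> :: "real \<Rightarrow> real" and n :: int
  assumes compat: "\<phi> q = q * \<phi> 1" and mono: "mono_on {1..q} \<phi>" and "1 \<le> s" "s \<le> q"
  shows "q powr n * \<phi> 1 \<le> extend \<phi> (q powr n * s)"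
    and "extend \<phi> (q powr n * s) \<le> q powr (n + 1) * \<phi> 1"
proof -
  have "\<phi> 1 \<le> \<phi> s" "\<phi> s \<le> \<phi> q"
    using assms(3,4) by (auto intro!: mono_onD[OF mono])
  then have "q powr n * \<phi> 1 \<le> q powr n * \<phi> s" "q powr n * \<phi> s \<le> q powr n * (q * \<phi> 1)"
    using compat by (simp_all add: mult_left_mono)
  moreover have "extend \<phi> (q powr n * s) = q powr n * \<phi> s"
    using extend_scaled[of \<phi> s n] compat assms(3,4) by simp
  ultimately show "q powr n * \<phi> 1 \<le> extend \<phi> (q powr n * s)"
    "extend \<phi> (q powr n * s) \<le> q powr (n + 1) * \<phi> 1"
    using base_gt_1 by (simp_all add: powr_add mult_ac)
qed

lemma mono_on_extend:
  fixes \<phi> :: "real \<Rightarrow> real"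
  assumes compat: "\<phi> q = q * \<phi> 1" and mono: "mono_on {1..q} \<phi>" and nonneg: "0 \<le> \<phi> 1"
  shows "mono_on {0..} (extend \<phi>)"
proof (rule mono_onI)
  fix x y :: real
  assume "x \<in> {0..}" "y \<in> {0..}" "x \<le> y"
  show "extend \<phi> x \<le> extend \<phi> y"
  proof (cases "x = 0")
    case True
    have "0 \<le> \<phi> s" if "1 \<le> s" "s < q" for s
      using nonneg mono_onD[OF mono, of 1 s] that by simp
    then have "0 \<le> extend \<phi> y"
      by (rule extend_nonneg)
    with True show ?thesis
      by simp
  next
    case False
    with \<open>x \<in> {0..}\<close> \<open>x \<le> y\<close> have "x > 0" "y > 0"
      by simp_all
    obtain a :: int and s where s: "1 \<le> s" "s < q" "x = q powr a * s"
      using scale_decomposition[OF \<open>x > 0\<close>] by blast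
    obtain b :: int and u where u: "1 \<le> u" "u < q" "y = q powr b * u"
      using scale_decomposition[OF \<open>y > 0\<close>] by blast
    have "q powr a \<le> x" "y < q powr (b + 1)"
      using s u base_gt_1 by (simp_all add: powr_add)
    with \<open>x \<le> y\<close> have "q powr a < q powr (b + 1)"
      by linarith
    then consider "a = b" | "a + 1 \<le> b"
      using base_gt_1 by fastforce
    then show ?thesis
    proof cases
      case 1
      with s u \<open>x \<le> y\<close> have "s \<le> u"
        using base_gt_1 by simp
      with s u have "\<phi> s \<le> \<phi> u"
        by (intro mono_onD[OF mono]) auto
      with s u 1 show ?thesis
        by (simp add: extend_scale extend_eq)
    next
      case 2
      then have "q powr (a + 1) * \<phi> 1 \<le> q powr b * \<phi> 1"
        using base_gt_1 nonneg by (intro mult_right_mono powr_mono) auto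
      with s u show ?thesis
        using extend_band_bounds(2)[OF compat mono, of s a] extend_band_bounds(1)[OF compat mono, of u b]
        by simp
    qed
  qed
qed

lemma complementarity_extend:
  fixes \<gamma> \<mu> :: "real \<Rightarrow> real"
  assumes compat: "\<mu> q = q * \<mu> 1" and cont: "continuous_on {1..q} \<mu>"
    and mono: "mono_on {1..q} \<mu>" and nonneg: "0 \<le> \<mu> 1"
    and flat: "\<And>s. 1 \<le> s \<Longrightarrow> s < q \<Longrightarrow> 0 < \<gamma> s \<Longrightarrow>
                 \<exists>a b. 0 < a \<and> a < s \<and> s < b \<and> extend \<mu> a = extend \<mu> b"
  shows "(\<integral>\<^sup>+ t. ennreal (extend \<gamma> t) * indicator {0..} t
           \<partial>interval_measure (\<lambda>t. extend \<mu> (max 0 t))) = 0"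
proof (rule nn_integral_interval_measure_eq_0_if_locally_flat)
  show "mono (\<lambda>t. extend \<mu> (max 0 t))"
  proof (rule monoI)
    fix x y :: real
    assume "x \<le> y"
    then show "extend \<mu> (max 0 x) \<le> extend \<mu> (max 0 y)"
      using compat mono nonneg by (intro mono_onD[OF mono_on_extend]) auto
  qed
  have "continuous_on UNIV (\<lambda>t. extend \<mu> (max 0 t))"
    using compat cont
    by (intro continuous_on_compose2[OF continuous_on_extend] continuous_intros) auto
  then show "continuous (at_right x) (\<lambda>t. extend \<mu> (max 0 t))" for x
    by (simp add: continuous_on_eq_continuous_at continuous_at_imp_continuous_at_within)
  fix t
  assume "ennreal (extend \<gamma> t) * indicator {0..} t \<noteq> 0"
  then have "0 < extend \<gamma> t"
    by (auto simp: indicator_def ennreal_eq_0_iff split: if_splits)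
  then have "t > 0"
    by (cases "t > 0") (auto simp: extend_def)
  then obtain n :: int and s where s: "1 \<le> s" "s < q" "t = q powr n * s"
    by (rule scale_decomposition)
  with \<open>0 < extend \<gamma> t\<close> have "0 < \<gamma> s"
    by (simp add: extend_scale extend_eq zero_less_mult_iff)
  then obtain a b where ab: "0 < a" "a < s" "s < b" "extend \<mu> a = extend \<mu> b"
    using flat s by blast
  then have "extend \<mu> (max 0 (q powr n * a)) = extend \<mu> (max 0 (q powr n * b))"
    by (simp add: extend_scale)
  moreover have "q powr n * a < t" "t < q powr n * b"
    using s ab by simp_all
  ultimately show "\<exists>a b. a < t \<and> t < b \<and> extend \<mu> (max 0 a) = extend \<mu> (max 0 b)"
    by blast
qed

lemma skorokhod_solution_extend:
  fixes F M :: "real \<Rightarrow> real^2" and R :: "real^2^2"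
  defines "G \<equiv> \<lambda>s. F s + R *v M s"
  assumes cont_F: "continuous_on {1..q} F" and cont_M: "continuous_on {1..q} M"
    and compat_F: "F q = q *\<^sub>R F 1" and compat_M: "M q = q *\<^sub>R M 1"
    and mono_M: "\<And>j. mono_on {1..q} (\<lambda>s. M s $ j)" and M_1: "\<And>j. 0 \<le> M 1 $ j"
    and nonneg_G: "\<And>s. 1 \<le> s \<Longrightarrow> s < q \<Longrightarrow> nonneg2 (G s)"
    \<comment> \<open>stated for the extension: around s = 1 the flat interval may reach into the previous band\<close>
    and flat_M: "\<And>j s. 1 \<le> s \<Longrightarrow> s < q \<Longrightarrow> 0 < G s $ j \<Longrightarrow>
                   \<exists>a b. 0 < a \<and> a < s \<and> s < b \<and> extend M a $ j = extend M b $ j"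
  shows "skorokhod_solution R (extend F) (extend G) (extend M)"
proof -
  have compat_G: "G q = q *\<^sub>R G 1"
    using compat_F compat_M by (simp add: G_def scaleR_add_right matrix_vector_mult_scaleR)
  have cont_G: "continuous_on {1..q} G"
    unfolding G_def using cont_F cont_M
    by (intro continuous_intros bounded_linear.continuous_on[OF matrix_vector_mul_bounded_linear])
  have "extend G t = extend F t + R *v extend M t" for t
    unfolding G_def extend_add by (simp add: extend_linear[OF matrix_vector_mul_linear])
  moreover have "nonneg2 (extend G t)" for t
    using nonneg_G unfolding nonneg2_def extend_nth by (auto intro: extend_nonneg)
  moreover have "mono_on {0..} (\<lambda>t. extend M t $ j)" for j
    unfolding extend_nth using compat_M mono_M M_1 by (intro mono_on_extend) simp_all
  moreover have "(\<integral>\<^sup>+ t. ennreal (extend G t $ j) * indicator {0..} t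
      \<partial>interval_measure (\<lambda>t. extend M (max 0 t) $ j)) = 0" for j
    unfolding extend_nth using compat_M cont_M mono_M M_1 flat_M[of _ j]
    by (intro complementarity_extend) (auto simp: extend_nth intro: continuous_intros)
  ultimately show ?thesis
    unfolding skorokhod_solution_def
    using continuous_on_extend[OF compat_G cont_G] continuous_on_extend[OF compat_M cont_M]
    by simp
qed

end

definition ramp :: "real \<Rightarrow> real \<Rightarrow> real \<Rightarrow> real" where
  "ramp a b s = max a (min b s) - a"

lemma ramp_mono: "x \<le> y \<Longrightarrow> ramp a b x \<le> ramp a b y"
  unfolding ramp_def by linarith

lemma continuous_on_ramp [continuous_intros]: "continuous_on S (ramp a b)"
  unfolding ramp_def by (intro continuous_intros)

lemma continuous_on_vector_2 [continuous_intros]: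
  fixes f g :: "'a::topological_space \<Rightarrow> real"
  assumes "continuous_on S f" "continuous_on S g"
  shows "continuous_on S (\<lambda>s. vector [f s, g s] :: real^2)"
proof -
  have "continuous_on S (\<lambda>s. \<chi> i::2. if i = 1 then f s else g s)"
  proof (rule continuous_on_vec_lambda)
    fix i :: 2
    show "continuous_on S (\<lambda>s. if i = 1 then f s else g s)"
      using assms by (cases "i = 1") simp_all
  qed
  moreover have "(\<lambda>s. \<chi> i::2. if i = 1 then f s else g s) = (\<lambda>s. vector [f s, g s])"
    by (simp add: fun_eq_iff vec_eq_iff forall_2)
  ultimately show ?thesis
    by (simp only:)
qed

text \<open>On [1,4], m pushes on face 2 during [1,3/2] and on face 1 during [3/2,2], while m' pushes
  on face 2 during [2,3] and on face 1 during [3,4]; see g_profile and g'_profile.\<close>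

definition f_profile :: "real \<Rightarrow> real^2" where
  "f_profile s = vector
     [12 * ramp 1 (3/2) s - 12 * ramp (3/2) 2 s + 12 * ramp 2 3 s - 12 * ramp 3 4 s,
      -3 - 6 * ramp 1 (3/2) s - 6 * ramp 2 3 s]"

definition m_profile :: "real \<Rightarrow> real^2" where
  "m_profile s = vector [2 + 12 * ramp (3/2) 2 s, 1 + 6 * ramp 1 (3/2) s]"

definition m'_profile :: "real \<Rightarrow> real^2" where
  "m'_profile s = vector [4 + 12 * ramp 3 4 s, 2 + 6 * ramp 2 3 s]"

lemma R_ex_mult: "R_ex *v x = vector [x $ 1 - 2 * x $ 2, x $ 1 + x $ 2]"
  unfolding R_ex_def by (simp add: vec_eq_iff forall_2 matrix_vector_mult_def sum_2)

lemma g_profile: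
  "f_profile s + R_ex *v m_profile s =
     vector [12 * ramp 2 3 s - 12 * ramp 3 4 s, 12 * ramp (3/2) 2 s - 6 * ramp 2 3 s]"
  by (simp add: vec_eq_iff forall_2 R_ex_mult f_profile_def m_profile_def)

lemma g'_profile:
  "f_profile s + R_ex *v m'_profile s =
     vector [12 * ramp 1 (3/2) s - 12 * ramp (3/2) 2 s, 3 - 6 * ramp 1 (3/2) s + 12 * ramp 3 4 s]"
  by (simp add: vec_eq_iff forall_2 R_ex_mult f_profile_def m'_profile_def)

lemma profiles_compat:
  "f_profile 4 = 4 *\<^sub>R f_profile 1" "m_profile 4 = 4 *\<^sub>R m_profile 1"
  "m'_profile 4 = 4 *\<^sub>R m'_profile 1"
  by (simp_all add: vec_eq_iff forall_2 ramp_def f_profile_def m_profile_def m'_profile_def)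

lemma profiles_continuous:
  "continuous_on S f_profile" "continuous_on S m_profile" "continuous_on S m'_profile"
  unfolding f_profile_def m_profile_def m'_profile_def
  by (intro continuous_intros)+

lemma m_profiles_mono: "mono_on S (\<lambda>s. m_profile s $ j)" "mono_on S (\<lambda>s. m'_profile s $ j)"
  using exhaust_2[of j]
  by (auto intro!: mono_onI ramp_mono simp: m_profile_def m'_profile_def)

lemma m_profiles_nonneg: "0 \<le> m_profile 1 $ j" "0 \<le> m'_profile 1 $ j"
  using exhaust_2[of j] by (auto simp: m_profile_def m'_profile_def ramp_def)

lemma g_profiles_nonneg:
  "nonneg2 (f_profile s + R_ex *v m_profile s)" "nonneg2 (f_profile s + R_ex *v m'_profile s)"
  unfolding g_profile g'_profile nonneg2_def ramp_def by auto

interpretation quartic: self_similar_extension 4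
  by unfold_locales simp

lemma m_profile_flat:
  assumes "1 \<le> s" "s < 4" "0 < (f_profile s + R_ex *v m_profile s) $ j"
  shows "\<exists>a b. 0 < a \<and> a < s \<and> s < b \<and>
    quartic.extend m_profile a $ j = quartic.extend m_profile b $ j"
proof -
  have "(j = 1 \<and> 2 < s) \<or> (j = 2 \<and> 3/2 < s)"
    using assms exhaust_2[of j] unfolding g_profile ramp_def by auto
  then show ?thesis
  proof
    assume "j = 1 \<and> 2 < s"
    then show ?thesis
      using assms profiles_compat
      by (intro exI[of _ 2] exI[of _ 4]) (simp add: quartic.extend_eq_closed m_profile_def ramp_def)
  next
    assume "j = 2 \<and> 3/2 < s"
    then show ?thesis
      using assms profiles_compat
      by (intro exI[of _ "3/2"] exI[of _ 4]) (simp add: quartic.extend_eq_closed m_profile_def ramp_def)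
  qed
qed

lemma m'_profile_flat:
  assumes "1 \<le> s" "s < 4" "0 < (f_profile s + R_ex *v m'_profile s) $ j"
  shows "\<exists>a b. 0 < a \<and> a < s \<and> s < b \<and>
    quartic.extend m'_profile a $ j = quartic.extend m'_profile b $ j"
proof -
  have extend_m': "quartic.extend m'_profile s = m'_profile s" if "1 \<le> s" "s \<le> 4" for s
    using that profiles_compat by (simp add: quartic.extend_eq_closed)
  have "(j = 1 \<and> 1 < s \<and> s < 2) \<or> (j = 2 \<and> s < 3/2) \<or> (j = 2 \<and> 3 < s)"
    using assms exhaust_2[of j] unfolding g'_profile ramp_def by auto
  then show ?thesis
  proof (elim disjE)
    assume "j = 1 \<and> 1 < s \<and> s < 2"
    then show ?thesis
      by (intro exI[of _ 1] exI[of _ 3]) (simp add: extend_m' m'_profile_def ramp_def)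
  next
    assume "j = 2 \<and> s < 3/2"
    \<comment> \<open>g' is positive at s = 1, so the flat interval must start in the previous band\<close>
    moreover have "quartic.extend m'_profile (3/4) = (1/4) *\<^sub>R m'_profile 3"
      using quartic.extend_scale[of m'_profile "-1" 3] by (simp add: extend_m' powr_minus)
    ultimately show ?thesis
      using assms
      by (intro exI[of _ "3/4"] exI[of _ 2]) (simp add: extend_m' m'_profile_def ramp_def)
  next
    assume "j = 2 \<and> 3 < s"
    then show ?thesis
      using assms by (intro exI[of _ 3] exI[of _ 4]) (simp add: extend_m' m'_profile_def ramp_def)
  qed
qed

theorem theorem2p1:
  shows "\<exists>f g m g' m'. driving_function f \<and>
           skorokhod_solution R_ex f g m \<and> skorokhod_solution R_ex f g' m' \<and>
           (\<exists>t\<ge>0. g t \<noteq> g' t)"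
proof -
  let ?f = "quartic.extend f_profile"
  let ?g = "\<lambda>s. f_profile s + R_ex *v m_profile s"
  let ?g' = "\<lambda>s. f_profile s + R_ex *v m'_profile s"
  have "driving_function ?f"
    using quartic.continuous_on_extend[OF profiles_compat(1) profiles_continuous(1)]
    by (simp add: driving_function_def nonneg2_def)
  moreover have "skorokhod_solution R_ex ?f (quartic.extend ?g) (quartic.extend m_profile)"
    using profiles_compat profiles_continuous m_profiles_mono m_profiles_nonneg g_profiles_nonneg
      m_profile_flat
    by (intro quartic.skorokhod_solution_extend) simp_all
  moreover have "skorokhod_solution R_ex ?f (quartic.extend ?g') (quartic.extend m'_profile)"
    using profiles_compat profiles_continuous m_profiles_mono m_profiles_nonneg g_profiles_nonneg
      m'_profile_flat
    by (intro quartic.skorokhod_solution_extend) simp_all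
  moreover have "quartic.extend ?g 1 \<noteq> quartic.extend ?g' 1"
    by (simp add: quartic.extend_eq g_profile g'_profile ramp_def vec_eq_iff forall_2)
  ultimately show ?thesis
    using zero_le_one[where 'a=real] by blast
qed

end
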